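(* Let $q=p^{m_0}$ with $p$ prime, let $R$ be a commutative ring of characteristic $p$, and let $\rho$ be a permutation of $\{0,1,2,\ldots\}$. The $R$-linear map $\rho_\ast:R\{\{u\}\}\to R\{\{u\}\}$ defined by $$\rho_\ast\Big(\sum_{i\ge0}a_i\frac{u^i}{i!}\Big):=\sum_{i\ge0}a_i\frac{u^{\rho_\ast i}}{(\rho_\ast i)!}$$ is an $R$-algebra automorphism of $R\{\{u\}\}$.
   Context: For a nonnegative integer $i=\sum_j c_jq^j$ ($0\le c_j<q$), $\rho_\ast i:=\sum_j c_jq^{\rho(j)}$; $i\mapsto\rho_\ast i$ is a bijection of the nonnegative integers. $R\{\{u\}\}$ is the $R$-algebra of formal divided power series $\sum_{i\ge0}a_i\frac{u^i}{i!}$ ($a_i\in R$), where $\frac{u^i}{i!}$ are formal symbols, addition is coefficientwise, and multiplication is determined by $\frac{u^i}{i!}\cdot\frac{u^j}{j!}=\binom{i+j}{i}\frac{u^{i+j}}{(i+j)!}$. *)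

theory Defs
  imports "HOL-Computational_Algebra.Primes"
begin

text \<open>Divided power series R{{u}}: a series sum a_i u^i/i! is represented by its
coefficient function a :: nat => R.\<close>

definition dps_add :: "(nat \<Rightarrow> 'a::comm_ring_1) \<Rightarrow> (nat \<Rightarrow> 'a) \<Rightarrow> (nat \<Rightarrow> 'a)" where
  "dps_add a b = (\<lambda>n. a n + b n)"

definition dps_smult :: "'a::comm_ring_1 \<Rightarrow> (nat \<Rightarrow> 'a) \<Rightarrow> (nat \<Rightarrow> 'a)" where
  "dps_smult c a = (\<lambda>n. c * a n)"

text \<open>Multiplication determined by u^i/i! * u^j/j! = binom(i+j,i) u^(i+j)/(i+j)!.\<close>
definition dps_mult :: "(nat \<Rightarrow> 'a::comm_ring_1) \<Rightarrow> (nat \<Rightarrow> 'a) \<Rightarrow> (nat \<Rightarrow> 'a)" where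
  "dps_mult a b = (\<lambda>n. \<Sum>i\<le>n. of_nat (n choose i) * a i * b (n - i))"

definition dps_one :: "nat \<Rightarrow> 'a::comm_ring_1" where
  "dps_one = (\<lambda>n. if n = 0 then 1 else 0)"

text \<open>rho_* on nonnegative integers: permute the base-q digit positions.
  Digits at positions j > i of i vanish (q >= 2), so summing over j <= i suffices.\<close>
definition rho_nat :: "nat \<Rightarrow> (nat \<Rightarrow> nat) \<Rightarrow> nat \<Rightarrow> nat" where
  "rho_nat q \<rho> i = (\<Sum>j\<le>i. ((i div q ^ j) mod q) * q ^ (\<rho> j))"

text \<open>rho_* on divided power series: the coefficient a_i is moved to position rho_* i,
  i.e. the new coefficient at position k is a_(rho_*^{-1} k).\<close>
definition rho_dps :: "nat \<Rightarrow> (nat \<Rightarrow> nat) \<Rightarrow> (nat \<Rightarrow> 'a::comm_ring_1) \<Rightarrow> (nat \<Rightarrow> 'a)" where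
  "rho_dps q \<rho> a = (\<lambda>k. a (inv (rho_nat q \<rho>) k))"

definition is_dps_alg_aut :: "((nat \<Rightarrow> 'a::comm_ring_1) \<Rightarrow> (nat \<Rightarrow> 'a)) \<Rightarrow> bool" where
  "is_dps_alg_aut f \<longleftrightarrow>
     bij f \<and>
     (\<forall>a b. f (dps_add a b) = dps_add (f a) (f b)) \<and>
     (\<forall>c a. f (dps_smult c a) = dps_smult c (f a)) \<and>
     (\<forall>a b. f (dps_mult a b) = dps_mult (f a) (f b)) \<and>
     f dps_one = dps_one"

end

theory Submission
  imports Defs "HOL-Computational_Algebra.Polynomial" "HOL-Library.Groups_Big_Fun"
begin

text \<open>
  In base \<open>q\<close>, the map \<open>\<rho>\<^sub>*\<close> permutes digit positions. Hence it is a bijection of the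
  naturals, it preserves the digit-wise order, and \<open>\<rho>\<^sub>*(n - i) = \<rho>\<^sub>* n - \<rho>\<^sub>* i\<close> whenever
  every digit of \<open>i\<close> is at most the corresponding digit of \<open>n\<close>. In characteristic \<open>p\<close> we
  have \<open>(1 + X)\<^sup>q = 1 + X\<^sup>q\<close>, which yields Lucas's theorem in base \<open>q\<close>: \<open>n choose i\<close> is the
  product of the binomial coefficients of the digits. This product is invariant under
  permuting digit positions and vanishes unless \<open>i \<le> n\<close> digit-wise, so in the product
  formula \<open>(ab)\<^sub>n = \<Sum>\<^sub>i (n choose i) a\<^sub>i b\<^sub>n\<^sub>-\<^sub>i\<close> only digit-wise comparable pairs contribute,
  and \<open>\<rho>\<^sub>*\<close> carries these terms bijectively onto each other.
\<close>

definition digit :: "nat \<Rightarrow> nat \<Rightarrow> nat \<Rightarrow> nat" where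
  "digit q l n = n div q ^ l mod q"

lemma digit_0 [simp]: "digit q 0 n = n mod q"
  by (simp add: digit_def)

lemma digit_Suc: "digit q (Suc l) n = digit q l (n div q)"
  by (simp add: digit_def div_mult2_eq mult.commute)

lemma digit_eq_0: "n < q ^ l \<Longrightarrow> digit q l n = 0"
  by (simp add: digit_def)

context
  fixes q :: nat
  assumes base: "2 \<le> q"
begin

lemma digit_less: "digit q l n < q"
  using base by (simp add: digit_def)

lemma less_base_power: "n \<le> N \<Longrightarrow> n < q ^ N"
proof -
  assume "n \<le> N"
  have "n < 2 ^ n" by (rule less_exp)
  also have "\<dots> \<le> q ^ n" using base by (simp add: power_mono)
  also have "\<dots> \<le> q ^ N" using base \<open>n \<le> N\<close> by (simp add: power_increasing)
  finally show ?thesis .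
qed

lemma digit_eq_0_if_le: "n \<le> l \<Longrightarrow> digit q l n = 0"
  by (simp add: digit_eq_0 less_base_power)

lemma sum_digits: "n < q ^ N \<Longrightarrow> (\<Sum>l<N. digit q l n * q ^ l) = n"
proof (induction N arbitrary: n)
  case (Suc N)
  have "n div q < q ^ N"
    using Suc.prems base by (simp add: less_mult_imp_div_less mult.commute)
  have "(\<Sum>l<Suc N. digit q l n * q ^ l) = n mod q + q * (\<Sum>l<N. digit q l (n div q) * q ^ l)"
    by (simp only: sum.lessThan_Suc_shift digit_Suc) (simp add: sum_distrib_left mult.left_commute)
  also have "\<dots> = n"
    using Suc.IH[OF \<open>n div q < q ^ N\<close>] by simp
  finally show ?case .
qed simp

lemma digit_sum_lessThan:
  assumes "\<And>l. l < N \<Longrightarrow> c l < q"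
  shows "digit q k (\<Sum>l<N. c l * q ^ l) = (if k < N then c k else 0)"
  using assms
proof (induction N arbitrary: c k)
  case (Suc N)
  define s where "s = (\<Sum>l<N. c (Suc l) * q ^ l)"
  have sum_eq: "(\<Sum>l<Suc N. c l * q ^ l) = c 0 + q * s"
    unfolding s_def sum.lessThan_Suc_shift by (simp add: sum_distrib_left mult.left_commute)
  have "c 0 < q" using Suc.prems by simp
  then have mod_eq: "(c 0 + q * s) mod q = c 0" and div_eq: "(c 0 + q * s) div q = s"
    by auto
  have digit_s: "digit q k' s = (if k' < N then c (Suc k') else 0)" for k'
    unfolding s_def by (rule Suc.IH) (simp add: Suc.prems)
  show ?case
  proof (cases k)
    case 0
    then show ?thesis by (simp only: sum_eq digit_0 mod_eq) simp
  next
    case (Suc k')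
    then show ?thesis by (simp only: sum_eq digit_Suc div_eq digit_s) simp
  qed
qed (simp add: digit_def)

lemma digit_sum:
  assumes "finite A" and "\<And>l. l \<in> A \<Longrightarrow> c l < q"
  shows "digit q k (\<Sum>l\<in>A. c l * q ^ l) = (if k \<in> A then c k else 0)"
proof -
  obtain N where N: "A \<subseteq> {..<N}"
    using \<open>finite A\<close> finite_nat_iff_bounded by auto
  have "(\<Sum>l\<in>A. c l * q ^ l) = (\<Sum>l<N. (if l \<in> A then c l else 0) * q ^ l)"
    by (rule sum.mono_neutral_cong_left) (use N in auto)
  also have "digit q k \<dots> = (if k \<in> A then c k else 0)"
    using N assms(2) base by (subst digit_sum_lessThan) auto
  finally show ?thesis .
qed

lemma digits_eqI:
  assumes "\<And>l. digit q l m = digit q l n"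
  shows "m = n"
proof -
  have "m = (\<Sum>l<m + n. digit q l m * q ^ l)"
    by (rule sum_digits[symmetric]) (simp add: less_base_power)
  also have "\<dots> = (\<Sum>l<m + n. digit q l n * q ^ l)"
    by (simp only: assms)
  also have "\<dots> = n"
    by (rule sum_digits) (simp add: less_base_power)
  finally show ?thesis .
qed

definition digitwise_le :: "nat \<Rightarrow> nat \<Rightarrow> bool" where
  "digitwise_le i n \<longleftrightarrow> (\<forall>l. digit q l i \<le> digit q l n)"

lemma digitwise_le_imp_le:
  assumes "digitwise_le i n"
  shows "i \<le> n"
proof -
  have "i = (\<Sum>l<i + n. digit q l i * q ^ l)"
    by (rule sum_digits[symmetric]) (simp add: less_base_power)
  also have "\<dots> \<le> (\<Sum>l<i + n. digit q l n * q ^ l)"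
    using assms unfolding digitwise_le_def by (intro sum_mono mult_right_mono) auto
  also have "\<dots> = n"
    by (rule sum_digits) (simp add: less_base_power)
  finally show ?thesis .
qed

lemma digit_diff:
  assumes "digitwise_le i n"
  shows "digit q l (n - i) = digit q l n - digit q l i"
proof -
  have le: "digit q l i \<le> digit q l n" for l
    using assms unfolding digitwise_le_def by blast
  have "n - i = (\<Sum>l<i + n. digit q l n * q ^ l) - (\<Sum>l<i + n. digit q l i * q ^ l)"
    by (simp only: sum_digits less_base_power le_add1 le_add2)
  also have "\<dots> = (\<Sum>l<i + n. (digit q l n - digit q l i) * q ^ l)"
    using le by (simp add: sum_subtractf_nat diff_mult_distrib)
  finally have diff_eq: "n - i = (\<Sum>l<i + n. (digit q l n - digit q l i) * q ^ l)" .
  show ?thesis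
    unfolding diff_eq using le_less_trans[OF diff_le_self digit_less]
    by (simp add: digit_sum_lessThan digit_eq_0_if_le)
qed

end

lemma rho_nat_0 [simp]: "rho_nat q \<rho> 0 = 0"
  by (simp add: rho_nat_def)

lemma digit_rho_nat:
  assumes "2 \<le> q" and "bij \<rho>"
  shows "digit q l (rho_nat q \<rho> n) = digit q (inv \<rho> l) n"
proof -
  have inv_rho: "inv \<rho> (\<rho> j) = j" for j
    using assms(2) by (simp add: bij_is_inj)
  have "inj_on \<rho> {..n}"
    using assms(2) bij_is_inj inj_on_subset by blast
  then have "rho_nat q \<rho> n = (\<Sum>k\<in>\<rho> ` {..n}. digit q (inv \<rho> k) n * q ^ k)"
    unfolding rho_nat_def digit_def[symmetric] by (simp add: sum.reindex inv_rho)
  also have "digit q l \<dots> = (if l \<in> \<rho> ` {..n} then digit q (inv \<rho> l) n else 0)"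
    using assms(1) by (simp add: digit_sum digit_less)
  also have "\<dots> = digit q (inv \<rho> l) n"
  proof -
    have "\<rho> (inv \<rho> l) = l"
      using assms(2) by (simp add: bij_is_surj surj_f_inv_f)
    then have "l \<notin> \<rho> ` {..n} \<Longrightarrow> n \<le> inv \<rho> l"
      by (metis atMost_iff image_eqI nat_le_linear)
    then show ?thesis
      using assms(1) by (auto simp: digit_eq_0_if_le)
  qed
  finally show ?thesis .
qed

lemma rho_nat_inv_rho_nat:
  assumes "2 \<le> q" and "bij \<rho>"
  shows "rho_nat q (inv \<rho>) (rho_nat q \<rho> n) = n"
proof (rule digits_eqI[OF assms(1)])
  fix l
  show "digit q l (rho_nat q (inv \<rho>) (rho_nat q \<rho> n)) = digit q l n"
    using assms by (simp add: digit_rho_nat bij_imp_bij_inv inv_inv_eq bij_is_inj)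
qed

lemma rho_nat_rho_nat_inv:
  assumes "2 \<le> q" and "bij \<rho>"
  shows "rho_nat q \<rho> (rho_nat q (inv \<rho>) n) = n"
  using rho_nat_inv_rho_nat[OF assms(1) bij_imp_bij_inv[OF assms(2)]] assms(2)
  by (simp add: inv_inv_eq)

lemma inv_rho_nat:
  assumes "2 \<le> q" and "bij \<rho>"
  shows "inv (rho_nat q \<rho>) = rho_nat q (inv \<rho>)"
  using assms by (intro inv_equality) (simp_all add: rho_nat_inv_rho_nat rho_nat_rho_nat_inv)

lemma bij_rho_nat:
  assumes "2 \<le> q" and "bij \<rho>"
  shows "bij (rho_nat q \<rho>)"
  using assms by (intro o_bij[where g = "rho_nat q (inv \<rho>)"])
    (simp_all add: fun_eq_iff rho_nat_inv_rho_nat rho_nat_rho_nat_inv)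

lemma digitwise_le_rho_nat_iff:
  assumes "2 \<le> q" and "bij \<rho>"
  shows "digitwise_le q (rho_nat q \<rho> i) (rho_nat q \<rho> n) \<longleftrightarrow> digitwise_le q i n"
proof -
  have "inv \<rho> (\<rho> l) = l" for l
    using assms(2) by (simp add: bij_is_inj)
  then show ?thesis
    unfolding digitwise_le_def[OF assms(1)] digit_rho_nat[OF assms] by metis
qed

lemma rho_nat_diff:
  assumes "2 \<le> q" and "bij \<rho>" and "digitwise_le q i n"
  shows "rho_nat q \<rho> (n - i) = rho_nat q \<rho> n - rho_nat q \<rho> i"
proof (rule digits_eqI[OF assms(1)])
  fix l
  have "digitwise_le q (rho_nat q \<rho> i) (rho_nat q \<rho> n)"
    using assms by (simp add: digitwise_le_rho_nat_iff)
  then show "digit q l (rho_nat q \<rho> (n - i)) = digit q l (rho_nat q \<rho> n - rho_nat q \<rho> i)"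
    using assms by (simp add: digit_rho_nat digit_diff)
qed

lemma coeff_power_monom_plus_1:
  assumes "d > 0"
  shows "coeff ((monom (1 :: 'a :: comm_semiring_1) d + 1) ^ n) k =
    (if d dvd k then of_nat (n choose (k div d)) else 0)"
proof -
  have "coeff ((monom (1 :: 'a) d + 1) ^ n) k = (\<Sum>j\<le>n. if j = k div d \<and> d dvd k then of_nat (n choose j) else 0)"
    using assms by (subst binomial_ring) (auto simp: coeff_sum of_nat_poly monom_power intro!: sum.cong)
  also have "\<dots> = (if d dvd k then of_nat (n choose (k div d)) else 0)"
    by (simp add: sum.delta binomial_eq_0)
  finally show ?thesis .
qed

lemma of_nat_choose_mult_char_power:
  assumes "prime CHAR('a :: comm_semiring_1)" and "q = CHAR('a) ^ m"
  shows "(of_nat (q * a choose k) :: 'a) = (if q dvd k then of_nat (a choose (k div q)) else 0)"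
proof -
  have "q > 0"
    using assms by (simp add: prime_gt_0_nat)
  have "(monom (1 :: 'a) 1 + 1) ^ q = monom 1 q + 1"
    using assms by (simp add: freshmans_dream' monom_power)
  then have "(monom (1 :: 'a) 1 + 1) ^ (q * a) = (monom 1 q + 1) ^ a"
    by (simp add: power_mult)
  then have "coeff ((monom (1 :: 'a) 1 + 1) ^ (q * a)) k = coeff ((monom 1 q + 1) ^ a) k"
    by simp
  then show ?thesis
    by (simp add: coeff_power_monom_plus_1 \<open>q > 0\<close>)
qed

lemma of_nat_choose_div_mod_char_power:
  assumes "prime CHAR('a :: comm_semiring_1)" and "q = CHAR('a) ^ m"
  shows "(of_nat (n choose i) :: 'a) = of_nat (n div q choose i div q) * of_nat (n mod q choose i mod q)"
proof -
  define a r where "a = n div q" and "r = n mod q"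
  have "q > 0"
    using assms by (simp add: prime_gt_0_nat)
  then have "r < q" and n: "n = q * a + r"
    by (simp_all add: a_def r_def)
  have summand: "(of_nat (q * a choose j) :: 'a) * of_nat (r choose (i - j)) =
      (if j = q * (i div q) then of_nat (a choose (i div q)) * of_nat (r choose (i mod q)) else 0)"
    if "j \<le> i" for j
  proof (cases "q dvd j")
    case True
    then obtain c where j: "j = q * c" ..
    have "c \<le> i div q"
      using \<open>q > 0\<close> \<open>j \<le> i\<close> j by (metis div_le_mono nonzero_mult_div_cancel_left less_not_refl2)
    show ?thesis
    proof (cases "c = i div q")
      case True
      then show ?thesis
        using assms \<open>q > 0\<close> j by (simp add: of_nat_choose_mult_char_power minus_mult_div_eq_mod)
    next
      case False
      with \<open>c \<le> i div q\<close> have "q * c + q \<le> q * (i div q)"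
        by (metis Suc_leI le_neq_implies_less mult_Suc_right mult_le_mono2 add.commute)
      then have "r < i - j"
        using \<open>r < q\<close> j times_div_less_eq_dividend[of q i] by linarith
      then show ?thesis
        using False \<open>q > 0\<close> j by (simp add: binomial_eq_0)
    qed
  next
    case False
    then show ?thesis
      using assms by (auto simp: of_nat_choose_mult_char_power)
  qed
  have "(of_nat (n choose i) :: 'a) = (\<Sum>j\<le>i. of_nat (q * a choose j) * of_nat (r choose (i - j)))"
    unfolding n vandermonde[symmetric] by simp
  also have "\<dots> = (\<Sum>j\<le>i. if j = q * (i div q) then of_nat (a choose (i div q)) * of_nat (r choose (i mod q)) else 0)"
    by (rule sum.cong) (simp_all add: summand)
  also have "\<dots> = of_nat (a choose (i div q)) * of_nat (r choose (i mod q))"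
    by (simp add: sum.delta div_times_less_eq_dividend)
  finally show ?thesis
    by (simp add: a_def r_def)
qed

context
  fixes q m :: nat
  assumes prime_char: "prime CHAR('a :: comm_semiring_1)"
    and q_eq: "q = CHAR('a) ^ m" and base: "2 \<le> q"
begin

lemma lucas_theorem_lessThan:
  "n < q ^ N \<Longrightarrow> i < q ^ N \<Longrightarrow>
    (of_nat (n choose i) :: 'a) = (\<Prod>l<N. of_nat (digit q l n choose digit q l i))"
proof (induction N arbitrary: n i)
  case (Suc N)
  have "n div q < q ^ N" "i div q < q ^ N"
    using Suc.prems base by (simp_all add: less_mult_imp_div_less mult.commute)
  then have "(\<Prod>l<Suc N. (of_nat (digit q l n choose digit q l i) :: 'a)) =
      of_nat (n mod q choose i mod q) * of_nat (n div q choose i div q)"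
    by (simp only: prod.lessThan_Suc_shift digit_0 digit_Suc Suc.IH[symmetric])
  also have "\<dots> = of_nat (n choose i)"
    by (simp only: of_nat_choose_div_mod_char_power[OF prime_char q_eq, of n i] mult.commute)
  finally show ?case ..
qed simp

lemma digit_choose_support:
  "{l. (of_nat (digit q l n choose digit q l i) :: 'a) \<noteq> 1} \<subseteq> {..<n + i}"
proof (rule subsetI, rule ccontr)
  fix l
  assume "l \<notin> {..<n + i}"
  then have "digit q l n = 0" "digit q l i = 0"
    using base by (simp_all add: digit_eq_0_if_le)
  moreover assume "l \<in> {l. (of_nat (digit q l n choose digit q l i) :: 'a) \<noteq> 1}"
  ultimately show False
    by simp
qed

lemma lucas_theorem: "(of_nat (n choose i) :: 'a) = (\<Prod>l. of_nat (digit q l n choose digit q l i))"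
proof -
  have "(of_nat (n choose i) :: 'a) = (\<Prod>l<n + i. of_nat (digit q l n choose digit q l i))"
    using base by (intro lucas_theorem_lessThan less_base_power) simp_all
  also have "\<dots> = (\<Prod>l. of_nat (digit q l n choose digit q l i))"
    by (rule Prod_any.expand_superset[symmetric]) (simp_all add: digit_choose_support)
  finally show ?thesis .
qed

lemma of_nat_choose_eq_0:
  assumes "\<not> digitwise_le q i n"
  shows "(of_nat (n choose i) :: 'a) = 0"
proof -
  obtain l where l: "digit q l n < digit q l i"
    using assms base by (auto simp: digitwise_le_def not_le)
  have "(of_nat (n choose i) :: 'a) = (\<Prod>l. of_nat (digit q l n choose digit q l i))"
    by (rule lucas_theorem)
  also have "\<dots> = 0"
    by (rule Prod_any_zero[where a = l])
      (simp_all add: finite_subset[OF digit_choose_support] binomial_eq_0 l)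
  finally show ?thesis .
qed

lemma of_nat_choose_rho_nat:
  assumes "bij \<rho>"
  shows "(of_nat (rho_nat q \<rho> n choose rho_nat q \<rho> i) :: 'a) = of_nat (n choose i)"
proof -
  have "(of_nat (rho_nat q \<rho> n choose rho_nat q \<rho> i) :: 'a) =
      (\<Prod>l. of_nat (digit q l (rho_nat q \<rho> n) choose digit q l (rho_nat q \<rho> i)))"
    by (rule lucas_theorem)
  also have "\<dots> = (\<Prod>l. of_nat (digit q (inv \<rho> l) n choose digit q (inv \<rho> l) i))"
    by (simp only: digit_rho_nat[OF base assms])
  also have "\<dots> = (\<Prod>l. of_nat (digit q l n choose digit q l i))"
    by (rule sym, rule Prod_any.reindex_cong[OF bij_imp_bij_inv[OF assms]]) (simp add: comp_def)
  also have "\<dots> = of_nat (n choose i)"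
    by (rule lucas_theorem[symmetric])
  finally show ?thesis .
qed

lemma sum_choose_digitwise_le:
  "(\<Sum>i\<le>n. (of_nat (n choose i) :: 'a) * f i) = (\<Sum>i | digitwise_le q i n. of_nat (n choose i) * f i)"
  by (rule sum.mono_neutral_right) (auto simp: of_nat_choose_eq_0 digitwise_le_imp_le[OF base])

lemma sum_choose_rho_nat:
  assumes "bij \<rho>"
  shows "(\<Sum>i\<le>rho_nat q \<rho> n. (of_nat (rho_nat q \<rho> n choose i) :: 'a) * f i (rho_nat q \<rho> n - i)) =
    (\<Sum>j\<le>n. of_nat (n choose j) * f (rho_nat q \<rho> j) (rho_nat q \<rho> (n - j)))"
proof -
  have le_iff: "digitwise_le q (rho_nat q \<rho> i) (rho_nat q \<rho> n) \<longleftrightarrow> digitwise_le q i n" for i n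
    by (rule digitwise_le_rho_nat_iff[OF base assms])
  have "{i. digitwise_le q i (rho_nat q \<rho> n)} = rho_nat q \<rho> ` {j. digitwise_le q j n}"
  proof (intro equalityI subsetI)
    fix i
    assume "i \<in> {i. digitwise_le q i (rho_nat q \<rho> n)}"
    then have "rho_nat q (inv \<rho>) i \<in> {j. digitwise_le q j n}"
      using le_iff[of "rho_nat q (inv \<rho>) i"] by (simp add: rho_nat_rho_nat_inv[OF base assms])
    then show "i \<in> rho_nat q \<rho> ` {j. digitwise_le q j n}"
      by (rule rev_image_eqI) (simp add: rho_nat_rho_nat_inv[OF base assms])
  qed (auto simp: le_iff)
  moreover have "inj (rho_nat q \<rho>)"
    using bij_rho_nat[OF base assms] by (rule bij_is_inj)
  ultimately have "(\<Sum>i | digitwise_le q i (rho_nat q \<rho> n).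
        (of_nat (rho_nat q \<rho> n choose i) :: 'a) * f i (rho_nat q \<rho> n - i)) =
      (\<Sum>j | digitwise_le q j n. of_nat (rho_nat q \<rho> n choose rho_nat q \<rho> j) *
        f (rho_nat q \<rho> j) (rho_nat q \<rho> n - rho_nat q \<rho> j))"
    by (simp add: sum.reindex inj_on_subset)
  also have "\<dots> = (\<Sum>j | digitwise_le q j n. of_nat (n choose j) * f (rho_nat q \<rho> j) (rho_nat q \<rho> (n - j)))"
    by (rule sum.cong) (simp_all add: of_nat_choose_rho_nat assms rho_nat_diff base)
  finally show ?thesis
    by (simp only: sum_choose_digitwise_le)
qed

end

lemma rho_dps_eq_comp:
  assumes "2 \<le> q" and "bij \<rho>"
  shows "rho_dps q \<rho> a = a \<circ> rho_nat q (inv \<rho>)"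
  using assms by (simp add: rho_dps_def inv_rho_nat comp_def)

lemma is_dps_alg_aut_rho_dps:
  assumes "prime CHAR('a :: comm_ring_1)" and "q = CHAR('a) ^ m" and "2 \<le> q" and "bij \<rho>"
  shows "is_dps_alg_aut (rho_dps q \<rho> :: (nat \<Rightarrow> 'a) \<Rightarrow> (nat \<Rightarrow> 'a))"
proof -
  let ?\<sigma> = "rho_nat q \<rho>" and ?\<tau> = "rho_nat q (inv \<rho>)"
  have \<tau>_\<sigma>: "?\<tau> (?\<sigma> n) = n" and \<sigma>_\<tau>: "?\<sigma> (?\<tau> n) = n" for n
    using assms(3,4) by (simp_all add: rho_nat_inv_rho_nat rho_nat_rho_nat_inv)
  have rho_dps: "rho_dps q \<rho> a = a \<circ> ?\<tau>" for a :: "nat \<Rightarrow> 'a"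
    using assms(3,4) by (rule rho_dps_eq_comp)
  have "bij (rho_dps q \<rho> :: (nat \<Rightarrow> 'a) \<Rightarrow> (nat \<Rightarrow> 'a))"
    by (rule o_bij[where g = "\<lambda>a. a \<circ> ?\<sigma>"]) (simp_all add: fun_eq_iff rho_dps \<tau>_\<sigma> \<sigma>_\<tau>)
  moreover have "rho_dps q \<rho> (dps_mult a b) = dps_mult (rho_dps q \<rho> a) (rho_dps q \<rho> b)"
    for a b :: "nat \<Rightarrow> 'a"
  proof
    fix k
    have "dps_mult (rho_dps q \<rho> a) (rho_dps q \<rho> b) (?\<sigma> (?\<tau> k)) = dps_mult a b (?\<tau> k)"
      using sum_choose_rho_nat[OF assms, where f = "\<lambda>i j. a (?\<tau> i) * b (?\<tau> j)" and n = "?\<tau> k"]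
      by (simp add: dps_mult_def rho_dps \<tau>_\<sigma> mult.assoc)
    then show "rho_dps q \<rho> (dps_mult a b) k = dps_mult (rho_dps q \<rho> a) (rho_dps q \<rho> b) k"
      by (simp add: \<sigma>_\<tau> rho_dps)
  qed
  moreover have "?\<tau> k = 0 \<longleftrightarrow> k = 0" for k
    by (metis \<sigma>_\<tau> rho_nat_0)
  then have "rho_dps q \<rho> dps_one = (dps_one :: nat \<Rightarrow> 'a)"
    by (simp add: rho_dps dps_one_def comp_def)
  ultimately show ?thesis
    by (simp add: is_dps_alg_aut_def rho_dps dps_add_def dps_smult_def comp_def)
qed

theorem proposition7p8:
  fixes p m0 :: nat and \<rho> :: "nat \<Rightarrow> nat"
  assumes "prime p" and "m0 \<ge> 1"
    and "CHAR('a::comm_ring_1) = p"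
    and "bij \<rho>"
  shows "is_dps_alg_aut (rho_dps (p ^ m0) \<rho> :: (nat \<Rightarrow> 'a) \<Rightarrow> (nat \<Rightarrow> 'a))"
proof (rule is_dps_alg_aut_rho_dps)
  have "2 \<le> p"
    using \<open>prime p\<close> by (rule prime_ge_2_nat)
  also have "p \<le> p ^ m0"
    using \<open>m0 \<ge> 1\<close> \<open>2 \<le> p\<close> by (simp add: self_le_power)
  finally show "2 \<le> p ^ m0" .
qed (use assms in simp_all)

end
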